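(* Let $L\subset\mathbb{Z}^m$ be a non-zero lattice with $L\cap\mathbb{N}^m=\{\mathbf 0\}$, and let $q$ be the number of elements of $\mathcal{T}_{\min}$. Then $\mathrm{bar}(I_L)\ge\lceil q/2\rceil$.
   Context: $K$ is a field, $I_L=(\mathbf x^{\mathbf u_+}-\mathbf x^{\mathbf u_-}:\mathbf u\in L)\subset K[x_1,\ldots,x_m]$ where $\mathbf u_\pm$ are the positive/negative parts of $\mathbf u$. A monomial $M$ is indispensable of $I_L$ if every system of binomial generators of $I_L$ contains a binomial having $M$ as a monomial. $\mathcal{T}_{\min}$ is the set of inclusion-minimal elements among supports $\mathrm{supp}(M)=\{i:x_i\mid M\}$ of indispensable monomials $M$ of $I_L$. $\mathrm{bar}(I_L)$ is the least $s$ such that there are binomials $B_1,\ldots,B_s\in I_L$ with $\mathrm{rad}(I_L)=\mathrm{rad}(B_1,\ldots,B_s)$. *)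

theory Defs
  imports Complex_Main "HOL-Library.Poly_Mapping"
begin

text \<open>Polynomials over a field 'k in the variables x_0, x_1, ...; a monomial x^a is
  represented by its exponent a (a finitely supported map nat to nat), a polynomial by its coefficient map.
  The ring K[x_1,...,x_m] is the subring of polynomials only involving the variables
  with index < m.\<close>

type_synonym 'k mpoly = "(nat \<Rightarrow>\<^sub>0 nat) \<Rightarrow>\<^sub>0 'k"

definition in_ring :: "nat \<Rightarrow> 'k::field mpoly \<Rightarrow> bool" where
  "in_ring m p \<longleftrightarrow> (\<forall>a \<in> Poly_Mapping.keys p. Poly_Mapping.keys a \<subseteq> {..<m})"

definition gen_ideal :: "nat \<Rightarrow> 'k::field mpoly set \<Rightarrow> 'k mpoly set" where
  "gen_ideal m S = {p. \<exists>F c. finite F \<and> F \<subseteq> S \<and> (\<forall>s\<in>F. in_ring m (c s)) \<and>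
                          p = (\<Sum>s\<in>F. c s * s)}"

definition radical :: "nat \<Rightarrow> 'k::field mpoly set \<Rightarrow> 'k mpoly set" where
  "radical m I = {p. in_ring m p \<and> (\<exists>n. p ^ n \<in> I)}"

definition xmon :: "(nat \<Rightarrow>\<^sub>0 nat) \<Rightarrow> 'k::field mpoly" where
  "xmon a = Poly_Mapping.single a 1"

definition is_binomial :: "nat \<Rightarrow> 'k::field mpoly \<Rightarrow> bool" where
  "is_binomial m p \<longleftrightarrow> (\<exists>a b. Poly_Mapping.keys a \<subseteq> {..<m} \<and> Poly_Mapping.keys b \<subseteq> {..<m} \<and> p = xmon a - xmon b)"

text \<open>Lattice vectors u \<in> Z^m are functions nat \<Rightarrow> int vanishing outside {..<m};
  positive and negative parts as exponent vectors.\<close>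
definition pos_part :: "nat \<Rightarrow> (nat \<Rightarrow> int) \<Rightarrow> (nat \<Rightarrow>\<^sub>0 nat)" where
  "pos_part m u = Abs_poly_mapping (\<lambda>i. if i < m then nat (u i) else 0)"

definition neg_part :: "nat \<Rightarrow> (nat \<Rightarrow> int) \<Rightarrow> (nat \<Rightarrow>\<^sub>0 nat)" where
  "neg_part m u = Abs_poly_mapping (\<lambda>i. if i < m then nat (- u i) else 0)"

definition is_lattice :: "nat \<Rightarrow> (nat \<Rightarrow> int) set \<Rightarrow> bool" where
  "is_lattice m L \<longleftrightarrow> L \<subseteq> {u. \<forall>i\<ge>m. u i = 0} \<and> (\<lambda>i. 0) \<in> L \<and>
     (\<forall>u\<in>L. \<forall>v\<in>L. (\<lambda>i. u i + v i) \<in> L) \<and> (\<forall>u\<in>L. (\<lambda>i. - u i) \<in> L)"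

definition lattice_ideal :: "nat \<Rightarrow> (nat \<Rightarrow> int) set \<Rightarrow> 'k::field mpoly set" where
  "lattice_ideal m L = gen_ideal m {xmon (pos_part m u) - xmon (neg_part m u) | u. u \<in> L}"

definition indispensable :: "nat \<Rightarrow> 'k::field mpoly set \<Rightarrow> (nat \<Rightarrow>\<^sub>0 nat) \<Rightarrow> bool" where
  "indispensable m I c \<longleftrightarrow> Poly_Mapping.keys c \<subseteq> {..<m} \<and>
     (\<forall>G. (\<forall>g\<in>G. is_binomial m g) \<and> gen_ideal m G = I \<longrightarrow> (\<exists>B\<in>G. c \<in> Poly_Mapping.keys B))"

definition T_min :: "nat \<Rightarrow> 'k::field mpoly set \<Rightarrow> nat set set" where
  "T_min m I = (let T = {Poly_Mapping.keys c | c. indispensable m I c} in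
                  {S \<in> T. \<not> (\<exists>S'\<in>T. S' \<subset> S)})"

definition bar :: "nat \<Rightarrow> 'k::field mpoly set \<Rightarrow> nat" where
  "bar m I = (LEAST s. \<exists>B :: nat \<Rightarrow> 'k mpoly.
      (\<forall>i<s. is_binomial m (B i) \<and> B i \<in> I) \<and>
      radical m I = radical m (gen_ideal m (B ` {..<s})))"

end

(*
  Each S in T_min is the support of an indispensable monomial x^c, and every monomial of a
  polynomial in I_L is divisible by x^(v+) for some non-zero v in L.  Taking v with v+ minimal
  makes x^(v+) itself indispensable, so by minimality of S every monomial of I_L supported
  inside S is supported exactly on S.  Now let B_1, ..., B_s be binomials with
  rad(I_L) = rad(B_1, ..., B_s).  Setting the variables outside S to zero is a ring
  endomorphism of K[x]; it does not kill the binomial of I_L containing x^c, hence not a power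
  of it, so it cannot kill every B_i: some monomial of some B_i has support exactly S.  A
  binomial has at most two monomials, so |T_min| <= 2s.  That bar(I_L) is attained at all
  rests on the finiteness of the Graver basis, i.e. Dickson's lemma for the conformal order.
*)

theory Submission
  imports Defs
begin

lemma lookup_pos_part [simp]:
  "Poly_Mapping.lookup (pos_part m u) i = (if i < m then nat (u i) else 0)"
proof -
  have "finite {i. (if i < m then nat (u i) else 0) \<noteq> 0}"
    by (rule finite_subset[of _ "{..<m}"]) auto
  thus ?thesis unfolding pos_part_def by simp
qed

lemma neg_part_eq_pos_part_uminus: "neg_part m u = pos_part m (\<lambda>i. - u i)"
  unfolding neg_part_def pos_part_def ..

lemma lookup_neg_part [simp]:
  "Poly_Mapping.lookup (neg_part m u) i = (if i < m then nat (- u i) else 0)"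
  by (simp add: neg_part_eq_pos_part_uminus)

lemma keys_pos_part: "Poly_Mapping.keys (pos_part m u) \<subseteq> {..<m}"
  by (auto simp: in_keys_iff split: if_splits)

lemma keys_neg_part: "Poly_Mapping.keys (neg_part m u) \<subseteq> {..<m}"
  by (auto simp: in_keys_iff split: if_splits)

lemma keys_add_nat: "Poly_Mapping.keys (a + b :: 'a \<Rightarrow>\<^sub>0 nat) = Poly_Mapping.keys a \<union> Poly_Mapping.keys b"
  by (auto simp: in_keys_iff lookup_add)

lemma keys_subset_if_lookup_le:
  "Poly_Mapping.lookup a \<le> Poly_Mapping.lookup b \<Longrightarrow> Poly_Mapping.keys a \<subseteq> Poly_Mapping.keys (b :: 'a \<Rightarrow>\<^sub>0 nat)"
  by (metis in_keys_iff le_fun_def le_zero_eq subsetI)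

lemma sum_lookup_strict_mono:
  fixes a b :: "'a \<Rightarrow>\<^sub>0 nat"
  assumes "Poly_Mapping.lookup a \<le> Poly_Mapping.lookup b" "a \<noteq> b" "finite I" "Poly_Mapping.keys b \<subseteq> I"
  shows "(\<Sum>i\<in>I. Poly_Mapping.lookup a i) < (\<Sum>i\<in>I. Poly_Mapping.lookup b i)"
proof -
  obtain i where i: "Poly_Mapping.lookup a i < Poly_Mapping.lookup b i"
    using assms(1,2) poly_mapping_eqI[of a b] by (metis antisym le_fun_def order_le_less)
  hence "i \<in> I" using assms(4) by (auto simp: in_keys_iff)
  with i show ?thesis using assms(1,3) by (intro sum_strict_mono_ex1) (auto simp: le_fun_def)
qed

lemma lattice_vanishes: "is_lattice m L \<Longrightarrow> u \<in> L \<Longrightarrow> m \<le> i \<Longrightarrow> u i = 0"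
  unfolding is_lattice_def by auto

lemma lattice_uminus: "is_lattice m L \<Longrightarrow> u \<in> L \<Longrightarrow> (\<lambda>i. - u i) \<in> L"
  unfolding is_lattice_def by auto

lemma lattice_diff:
  assumes "is_lattice m L" "u \<in> L" "v \<in> L"
  shows "(\<lambda>i. u i - v i) \<in> L"
proof -
  have "\<forall>u\<in>L. \<forall>v\<in>L. (\<lambda>i. u i + v i) \<in> L" using assms(1) unfolding is_lattice_def by auto
  from this[rule_format, OF assms(2) lattice_uminus[OF assms(1,3)]] show ?thesis by simp
qed

lemma xmon_add: "xmon (a + b) = (xmon a * xmon b :: 'k::field mpoly)"
  unfolding xmon_def by (simp add: mult_single)

lemma in_ring_zero: "in_ring m 0"
  unfolding in_ring_def by simp

lemma in_ring_one: "in_ring m 1"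
  unfolding in_ring_def by simp

lemma in_ring_add: "in_ring m p \<Longrightarrow> in_ring m q \<Longrightarrow> in_ring m (p + q)"
  unfolding in_ring_def using keys_add[of p q] by blast

lemma in_ring_diff: "in_ring m p \<Longrightarrow> in_ring m q \<Longrightarrow> in_ring m (p - q)"
  unfolding in_ring_def using keys_diff[of p q] by blast

lemma in_ring_mult: "in_ring m p \<Longrightarrow> in_ring m q \<Longrightarrow> in_ring m (p * q)"
  unfolding in_ring_def using keys_mult[of p q] by (fastforce simp: keys_add_nat)

lemma in_ring_xmon: "Poly_Mapping.keys a \<subseteq> {..<m} \<Longrightarrow> in_ring m (xmon a)"
  unfolding in_ring_def xmon_def by simp

lemma gen_ideal_zero: "0 \<in> gen_ideal m S"
  unfolding gen_ideal_def by (rule CollectI, rule exI[of _ "{}"]) auto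

lemma gen_ideal_base: "s \<in> S \<Longrightarrow> s \<in> gen_ideal m S"
  unfolding gen_ideal_def
  by (intro CollectI exI[of _ "{s}"] exI[of _ "\<lambda>_. 1"]) (auto simp: in_ring_one)

lemma gen_ideal_add:
  assumes "p \<in> gen_ideal m S" "q \<in> gen_ideal m S"
  shows "p + q \<in> gen_ideal m S"
proof -
  obtain F c where F: "finite F" "F \<subseteq> S" "\<forall>s\<in>F. in_ring m (c s)" "p = (\<Sum>s\<in>F. c s * s)"
    using assms(1) unfolding gen_ideal_def by blast
  obtain G d where G: "finite G" "G \<subseteq> S" "\<forall>s\<in>G. in_ring m (d s)" "q = (\<Sum>s\<in>G. d s * s)"
    using assms(2) unfolding gen_ideal_def by blast
  define e where "e s = (if s \<in> F then c s else 0) + (if s \<in> G then d s else 0)" for s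
  have "p = (\<Sum>s\<in>F \<union> G. (if s \<in> F then c s else 0) * s)"
    unfolding F(4) using F(1) G(1) by (intro sum.mono_neutral_cong_left) auto
  moreover have "q = (\<Sum>s\<in>F \<union> G. (if s \<in> G then d s else 0) * s)"
    unfolding G(4) using F(1) G(1) by (intro sum.mono_neutral_cong_left) auto
  ultimately have "p + q = (\<Sum>s\<in>F \<union> G. e s * s)"
    by (simp add: e_def sum.distrib distrib_right)
  moreover have "\<forall>s\<in>F \<union> G. in_ring m (e s)"
    using F(3) G(3) by (auto simp: e_def intro!: in_ring_add in_ring_zero)
  ultimately show ?thesis
    unfolding gen_ideal_def using F(1,2) G(1,2) by (intro CollectI exI[of _ "F \<union> G"] exI[of _ e]) auto
qed

lemma gen_ideal_mult:
  assumes "p \<in> gen_ideal m S" "in_ring m q"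
  shows "q * p \<in> gen_ideal m S"
proof -
  obtain F c where F: "finite F" "F \<subseteq> S" "\<forall>s\<in>F. in_ring m (c s)" "p = (\<Sum>s\<in>F. c s * s)"
    using assms(1) unfolding gen_ideal_def by blast
  have "q * p = (\<Sum>s\<in>F. (q * c s) * s)" unfolding F(4) by (simp add: sum_distrib_left mult.assoc)
  moreover have "\<forall>s\<in>F. in_ring m (q * c s)" using F(3) assms(2) by (auto intro: in_ring_mult)
  ultimately show ?thesis
    unfolding gen_ideal_def using F(1,2) by (intro CollectI exI[of _ F] exI[of _ "\<lambda>s. q * c s"]) auto
qed

lemma gen_ideal_mono: "S \<subseteq> T \<Longrightarrow> gen_ideal m S \<subseteq> gen_ideal m T"
  unfolding gen_ideal_def by blast

lemma gen_ideal_sum: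
  "finite F \<Longrightarrow> (\<And>s. s \<in> F \<Longrightarrow> f s \<in> gen_ideal m T) \<Longrightarrow> sum f F \<in> gen_ideal m T"
  by (induction F rule: finite_induct) (auto intro: gen_ideal_add gen_ideal_zero)

lemma gen_ideal_subset:
  assumes "S \<subseteq> gen_ideal m T"
  shows "gen_ideal m S \<subseteq> gen_ideal m T"
proof
  fix p assume "p \<in> gen_ideal m S"
  then obtain F c where F: "finite F" "F \<subseteq> S" "\<forall>s\<in>F. in_ring m (c s)" "p = (\<Sum>s\<in>F. c s * s)"
    unfolding gen_ideal_def by blast
  show "p \<in> gen_ideal m T" unfolding F(4)
    using F assms by (intro gen_ideal_sum gen_ideal_mult) auto
qed

lemma keys_gen_ideal:
  assumes "p \<in> gen_ideal m G" "e \<in> Poly_Mapping.keys p"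
  shows "\<exists>g\<in>G. \<exists>b\<in>Poly_Mapping.keys g. \<exists>a. e = a + b"
proof -
  obtain F c where F: "F \<subseteq> G" "p = (\<Sum>s\<in>F. c s * s)" using assms(1) unfolding gen_ideal_def by blast
  have "e \<in> Poly_Mapping.keys (\<Sum>s\<in>F. c s * s)" using assms(2) F(2) by simp
  then obtain g where g: "g \<in> F" "e \<in> Poly_Mapping.keys (c g * g)"
    using keys_sum[of "\<lambda>s. c s * s" F] by blast
  then obtain a b where "b \<in> Poly_Mapping.keys g" "e = a + b" using keys_mult by blast
  thus ?thesis using F(1) g(1) by blast
qed

section \<open>Finiteness of the Graver basis\<close>

lemma antichain_subset_slices:
  assumes "\<forall>f\<in>A. \<forall>x. x \<notin> D \<longrightarrow> f x = 0" "\<forall>f\<in>A. \<forall>g\<in>A. f \<le> g \<longrightarrow> f = g" "a \<in> A"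
  shows "A \<subseteq> insert a (\<Union>j\<in>D. \<Union>t<a j. {f \<in> A. f j = (t :: nat)})"
proof
  fix f assume f: "f \<in> A"
  show "f \<in> insert a (\<Union>j\<in>D. \<Union>t<a j. {f \<in> A. f j = t})"
  proof (cases "f = a")
    case False
    hence "\<not> a \<le> f" using assms(2,3) f by blast
    then obtain j where "f j < a j" by (auto simp: le_fun_def not_le)
    moreover from this have "j \<in> D" by (rule contrapos_pp) (use assms(1,3) in auto)
    ultimately show ?thesis using f by blast
  qed simp
qed

text \<open>Every element of the antichain other than a fixed \<open>a\<close> lies strictly below
  \<open>a\<close> in some coordinate \<open>j \<in> D\<close>; fixing the value there removes \<open>j\<close> from the support.\<close>
lemma finite_pointwise_antichain:
  assumes "finite D" "\<forall>f\<in>A. \<forall>x. x \<notin> D \<longrightarrow> f x = 0" "\<forall>f\<in>A. \<forall>g\<in>A. f \<le> g \<longrightarrow> f = g"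
  shows "finite (A :: ('a \<Rightarrow> nat) set)"
  using assms
proof (induction D arbitrary: A rule: finite_psubset_induct)
  case (psubset D)
  have finite_slice: "finite {f \<in> A. f j = t}" if "j \<in> D" for j t
  proof -
    let ?slice = "{f \<in> A. f j = t}"
    have "inj_on (\<lambda>f. f(j := 0)) ?slice"
    proof (rule inj_onI, rule ext)
      fix f g x assume "f \<in> ?slice" "g \<in> ?slice" "f(j := 0) = g(j := 0)"
      thus "f x = g x" by (cases "x = j") (auto dest: fun_cong[of _ _ x])
    qed
    moreover have "finite ((\<lambda>f. f(j := 0)) ` ?slice)"
    proof (rule psubset.IH[of "D - {j}"])
      show "D - {j} \<subset> D" using that by blast
      show "\<forall>f\<in>(\<lambda>f. f(j := 0)) ` ?slice. \<forall>x. x \<notin> D - {j} \<longrightarrow> f x = 0"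
        using psubset.prems(1) by auto
      have "f = g" if "f \<in> ?slice" "g \<in> ?slice" "f(j := 0) \<le> g(j := 0)" for f g
      proof -
        have "f x \<le> g x" for x using that le_funD[OF that(3), of x] by (cases "x = j") auto
        thus "f = g" using that psubset.prems(2) by (simp add: le_fun_def)
      qed
      thus "\<forall>f\<in>(\<lambda>f. f(j := 0)) ` ?slice. \<forall>g\<in>(\<lambda>f. f(j := 0)) ` ?slice. f \<le> g \<longrightarrow> f = g"
        by blast
    qed
    ultimately show ?thesis using finite_imageD by blast
  qed
  show ?case
  proof (cases "A = {}")
    case False
    then obtain a where "a \<in> A" by blast
    from antichain_subset_slices[OF psubset.prems this] show ?thesis
      by (rule finite_subset) (simp add: psubset.hyps finite_slice)
  qed simp
qed

definition conformal :: "(nat \<Rightarrow> int) \<Rightarrow> (nat \<Rightarrow> int) \<Rightarrow> bool" where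
  "conformal v u \<longleftrightarrow> (\<forall>i. 0 \<le> v i \<and> v i \<le> u i \<or> u i \<le> v i \<and> v i \<le> 0)"

definition graver_basis :: "(nat \<Rightarrow> int) set \<Rightarrow> (nat \<Rightarrow> int) set" where
  "graver_basis L = {u \<in> L. u \<noteq> (\<lambda>i. 0) \<and> (\<forall>v\<in>L. v \<noteq> (\<lambda>i. 0) \<and> conformal v u \<longrightarrow> v = u)}"

text \<open>The conformal order on \<open>\<int>\<^sup>m\<close> is the pointwise order on \<open>\<nat>\<^sup>2\<^sup>m\<close> after splitting each vector
  into its positive and negative part.\<close>
definition sign_parts :: "(nat \<Rightarrow> int) \<Rightarrow> bool \<times> nat \<Rightarrow> nat" where
  "sign_parts u = (\<lambda>(b, i). if b then nat (u i) else nat (- u i))"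

lemma sign_parts_le_iff: "sign_parts v \<le> sign_parts u \<longleftrightarrow> conformal v u"
proof -
  have "sign_parts v \<le> sign_parts u \<longleftrightarrow> (\<forall>i. nat (v i) \<le> nat (u i) \<and> nat (- v i) \<le> nat (- u i))"
    by (simp add: le_fun_def sign_parts_def split_paired_All all_bool_eq all_conj_distrib)
  moreover have "nat a \<le> nat b \<and> nat (- a) \<le> nat (- b) \<longleftrightarrow> (0 \<le> a \<and> a \<le> b \<or> b \<le> a \<and> a \<le> 0)"
    for a b :: int by arith
  ultimately show ?thesis unfolding conformal_def by simp
qed

lemma conformal_antisym:
  assumes "conformal u w" "conformal w u"
  shows "u = w"
proof
  fix i show "u i = w i" using assms[unfolded conformal_def, THEN spec[of _ i]] by linarith
qed

lemma inj_sign_parts: "inj sign_parts"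
proof (rule injI)
  fix u w assume "sign_parts u = sign_parts w"
  thus "u = w" using sign_parts_le_iff[of u w] sign_parts_le_iff[of w u] by (simp add: conformal_antisym)
qed

lemma finite_graver_basis:
  assumes "is_lattice m L"
  shows "finite (graver_basis L)"
proof -
  have "finite (sign_parts ` graver_basis L)"
  proof (rule finite_pointwise_antichain[of "UNIV \<times> {..<m}"])
    show "\<forall>f\<in>sign_parts ` graver_basis L. \<forall>x. x \<notin> UNIV \<times> {..<m} \<longrightarrow> f x = 0"
      by (auto simp: sign_parts_def graver_basis_def not_less lattice_vanishes[OF assms])
    show "\<forall>f\<in>sign_parts ` graver_basis L. \<forall>g\<in>sign_parts ` graver_basis L. f \<le> g \<longrightarrow> f = g"
      by (auto simp: sign_parts_le_iff graver_basis_def)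
  qed simp
  thus ?thesis by (rule finite_imageD) (rule inj_on_subset[OF inj_sign_parts], simp)
qed

section \<open>Binomials of the lattice ideal\<close>

definition lattice_binomial :: "nat \<Rightarrow> (nat \<Rightarrow> int) \<Rightarrow> 'k::field mpoly" where
  "lattice_binomial m u = xmon (pos_part m u) - xmon (neg_part m u)"

lemma lattice_ideal_eq_gen_ideal_binomials:
  "lattice_ideal m L = gen_ideal m (lattice_binomial m ` L)"
  unfolding lattice_ideal_def lattice_binomial_def by (simp only: Setcompr_eq_image)

lemma lattice_binomial_zero [simp]: "lattice_binomial m (\<lambda>i. 0) = 0"
  by (simp add: lattice_binomial_def neg_part_eq_pos_part_uminus)

lemma is_binomial_lattice_binomial: "is_binomial m (lattice_binomial m u)"
  unfolding is_binomial_def lattice_binomial_def using keys_pos_part keys_neg_part by blast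

lemma in_ring_lattice_binomial: "in_ring m (lattice_binomial m u)"
  unfolding lattice_binomial_def by (intro in_ring_diff in_ring_xmon keys_pos_part keys_neg_part)

lemma keys_lattice_binomial:
  "Poly_Mapping.keys (lattice_binomial m u) \<subseteq> {pos_part m u, neg_part m u}"
  unfolding lattice_binomial_def xmon_def using keys_diff by fastforce

definition l1_norm :: "nat \<Rightarrow> (nat \<Rightarrow> int) \<Rightarrow> nat" where
  "l1_norm m u = (\<Sum>i<m. nat (u i) + nat (- u i))"

lemma l1_norm_pos:
  assumes "is_lattice m L" "v \<in> L" "v \<noteq> (\<lambda>i. 0)"
  shows "0 < l1_norm m v"
proof -
  obtain i where i: "v i \<noteq> 0" using assms(3) by auto
  hence "i < m" using lattice_vanishes[OF assms(1,2)] by (meson not_le)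
  with i show ?thesis unfolding l1_norm_def by (intro sum_pos2[of _ i]) auto
qed

lemma conformal_split:
  assumes "conformal v u"
  defines "w \<equiv> \<lambda>i. u i - v i"
  shows "pos_part m u = pos_part m v + pos_part m w"
    and "neg_part m u = neg_part m v + neg_part m w"
    and "l1_norm m u = l1_norm m v + l1_norm m w"
proof -
  have "nat (u i) = nat (v i) + nat (w i) \<and> nat (- u i) = nat (- v i) + nat (- w i)" for i
    using assms(1)[unfolded conformal_def, THEN spec[of _ i]] unfolding w_def by arith
  thus "pos_part m u = pos_part m v + pos_part m w" "neg_part m u = neg_part m v + neg_part m w"
    "l1_norm m u = l1_norm m v + l1_norm m w"
    by (auto intro!: poly_mapping_eqI simp: lookup_add l1_norm_def sum.distrib)
qed

lemma lattice_binomial_conformal_split: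
  assumes "conformal v u"
  defines "w \<equiv> \<lambda>i. u i - v i"
  shows "(lattice_binomial m u :: 'k::field mpoly) =
           xmon (pos_part m w) * lattice_binomial m v + xmon (neg_part m v) * lattice_binomial m w"
  unfolding lattice_binomial_def w_def conformal_split[OF assms(1)] xmon_add by (simp add: algebra_simps)

lemma lattice_binomial_in_graver_ideal:
  assumes "is_lattice m L" "u \<in> L"
  shows "(lattice_binomial m u :: 'k::field mpoly) \<in> gen_ideal m (lattice_binomial m ` graver_basis L)"
  using assms(2)
proof (induction "l1_norm m u" arbitrary: u rule: less_induct)
  case less
  consider "u = (\<lambda>i. 0)" | "u \<in> graver_basis L"
    | v where "v \<in> L" "v \<noteq> (\<lambda>i. 0)" "conformal v u" "v \<noteq> u"
    using less.prems unfolding graver_basis_def by blast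
  thus ?case
  proof cases
    case 3
    define w where "w = (\<lambda>i. u i - v i)"
    have "w \<in> L" unfolding w_def using lattice_diff[OF assms(1) less.prems 3(1)] .
    moreover have "w \<noteq> (\<lambda>i. 0)" using 3(4) by (force simp: w_def fun_eq_iff)
    ultimately have "0 < l1_norm m v" "0 < l1_norm m w"
      using l1_norm_pos[OF assms(1)] 3(1,2) by auto
    moreover have "l1_norm m u = l1_norm m v + l1_norm m w"
      using conformal_split(3)[OF 3(3)] unfolding w_def .
    ultimately have "l1_norm m v < l1_norm m u" "l1_norm m w < l1_norm m u" by simp_all
    with \<open>w \<in> L\<close> 3(1) show ?thesis
      unfolding lattice_binomial_conformal_split[OF 3(3)] w_def[symmetric]
      by (intro gen_ideal_add gen_ideal_mult less.hyps in_ring_xmon keys_pos_part keys_neg_part)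
  qed (auto intro: gen_ideal_zero gen_ideal_base)
qed

lemma lattice_ideal_eq_graver_ideal:
  assumes "is_lattice m L"
  shows "lattice_ideal m L = gen_ideal m (lattice_binomial m ` graver_basis L)"
  unfolding lattice_ideal_eq_gen_ideal_binomials
proof
  show "gen_ideal m (lattice_binomial m ` L) \<subseteq> gen_ideal m (lattice_binomial m ` graver_basis L)"
    using lattice_binomial_in_graver_ideal[OF assms] by (intro gen_ideal_subset) blast
  show "gen_ideal m (lattice_binomial m ` graver_basis L) \<subseteq> gen_ideal m (lattice_binomial m ` L)"
    by (rule gen_ideal_mono) (auto simp: graver_basis_def)
qed

text \<open>Without a finite binomial generating set, \<open>bar\<close> would be the \<open>LEAST\<close> of an empty
  predicate, i.e. an unspecified number.\<close>
lemma bar_attained: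
  fixes I :: "'k::field mpoly set"
  assumes "is_lattice m L" and I_def: "I = lattice_ideal m L"
  shows "\<exists>B. (\<forall>i<bar m I. is_binomial m (B i) \<and> B i \<in> I) \<and>
             radical m I = radical m (gen_ideal m (B ` {..<bar m I}))"
proof -
  have "finite (lattice_binomial m ` graver_basis L :: 'k mpoly set)"
    using finite_graver_basis[OF assms(1)] by simp
  then obtain n and B :: "nat \<Rightarrow> 'k mpoly" where "lattice_binomial m ` graver_basis L = B ` {i. i < n}"
    unfolding finite_conv_nat_seg_image by blast
  hence B: "lattice_binomial m ` graver_basis L = B ` {..<n}" by (simp add: lessThan_def)
  hence "I = gen_ideal m (B ` {..<n})" unfolding I_def lattice_ideal_eq_graver_ideal[OF assms(1)] by simp
  moreover have "is_binomial m (B i)" if "i < n" for i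
  proof -
    have "B i \<in> lattice_binomial m ` graver_basis L" using B that by blast
    thus ?thesis by (auto simp: is_binomial_lattice_binomial)
  qed
  ultimately have witness: "(\<forall>i<n. is_binomial m (B i) \<and> B i \<in> I) \<and>
                   radical m I = radical m (gen_ideal m (B ` {..<n}))"
    by (auto intro: gen_ideal_base)
  have "\<exists>(s :: nat) B. (\<forall>i<s. is_binomial m (B i) \<and> B i \<in> I) \<and>
               radical m I = radical m (gen_ideal m (B ` {..<s}))"
    using witness by blast
  from LeastI_ex[OF this] show ?thesis unfolding bar_def .
qed

section \<open>Indispensable monomials\<close>

definition lattice_multiple :: "nat \<Rightarrow> (nat \<Rightarrow> int) set \<Rightarrow> (nat \<Rightarrow>\<^sub>0 nat) \<Rightarrow> bool" where
  "lattice_multiple m L e \<longleftrightarrow>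
     (\<exists>v\<in>L. v \<noteq> (\<lambda>i. 0) \<and> Poly_Mapping.lookup (pos_part m v) \<le> Poly_Mapping.lookup e)"

lemma keys_lattice_ideal:
  assumes "is_lattice m L" "(p :: 'k::field mpoly) \<in> lattice_ideal m L" "e \<in> Poly_Mapping.keys p"
  shows "lattice_multiple m L e"
proof -
  obtain u b a where u: "u \<in> L" and b: "b \<in> Poly_Mapping.keys (lattice_binomial m u :: 'k mpoly)"
    and e: "e = a + b"
    using keys_gen_ideal assms(2,3) unfolding lattice_ideal_eq_gen_ideal_binomials by blast
  have "u \<noteq> (\<lambda>i. 0)" using b by auto
  moreover from this have "(\<lambda>i. - u i) \<noteq> (\<lambda>i. 0)" by (auto simp: fun_eq_iff)
  moreover have "b = pos_part m u \<or> b = pos_part m (\<lambda>i. - u i)"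
    using b keys_lattice_binomial neg_part_eq_pos_part_uminus by blast
  ultimately obtain v where "v \<in> L" "v \<noteq> (\<lambda>i. 0)" "pos_part m v = b"
    using u lattice_uminus[OF assms(1) u] by blast
  moreover have "Poly_Mapping.lookup b \<le> Poly_Mapping.lookup e"
    unfolding e by (simp add: le_fun_def lookup_add)
  ultimately show ?thesis unfolding lattice_multiple_def by blast
qed

lemma exists_minimal_pos_part:
  assumes "v \<in> L" "v \<noteq> (\<lambda>i. 0)"
  shows "\<exists>u\<in>L. u \<noteq> (\<lambda>i. 0) \<and> Poly_Mapping.lookup (pos_part m u) \<le> Poly_Mapping.lookup (pos_part m v) \<and>
           (\<forall>w\<in>L. w \<noteq> (\<lambda>i. 0) \<and> Poly_Mapping.lookup (pos_part m w) \<le> Poly_Mapping.lookup (pos_part m u)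
              \<longrightarrow> pos_part m w = pos_part m u)"
proof -
  let ?P = "\<lambda>u. u \<in> L \<and> u \<noteq> (\<lambda>i. 0) \<and> Poly_Mapping.lookup (pos_part m u) \<le> Poly_Mapping.lookup (pos_part m v)"
  let ?size = "\<lambda>u. \<Sum>i<m. Poly_Mapping.lookup (pos_part m u) i"
  have "?P v" using assms by simp
  then obtain u where u: "?P u" and least: "\<forall>w. ?P w \<longrightarrow> ?size u \<le> ?size w"
    using ex_has_least_nat[of ?P v ?size] by blast
  have "pos_part m w = pos_part m u" if w: "w \<in> L" "w \<noteq> (\<lambda>i. 0)"
    "Poly_Mapping.lookup (pos_part m w) \<le> Poly_Mapping.lookup (pos_part m u)" for w
  proof (rule ccontr)
    assume "pos_part m w \<noteq> pos_part m u"
    hence "?size w < ?size u" using w(3) keys_pos_part by (intro sum_lookup_strict_mono) auto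
    moreover have "?P w" using w(1,2) order_trans[OF w(3)] u by blast
    hence "?size u \<le> ?size w" using least by blast
    ultimately show False by simp
  qed
  thus ?thesis using u by blast
qed

lemma pos_part_neq_neg_part:
  assumes "\<forall>i\<ge>m. u i = 0" "u \<noteq> (\<lambda>i. 0)"
  shows "pos_part m u \<noteq> neg_part m u"
proof
  assume eq: "pos_part m u = neg_part m u"
  obtain i where i: "u i \<noteq> 0" using assms(2) by auto
  hence "i < m" using assms(1) by (meson not_le)
  hence "nat (u i) = nat (- u i)" using arg_cong[OF eq, of "\<lambda>p. Poly_Mapping.lookup p i"] by simp
  thus False using i by linarith
qed

lemma indispensable_minimal_pos_part:
  assumes lat: "is_lattice m L" and u: "u \<in> L" "u \<noteq> (\<lambda>i. 0)"
    and minimal: "\<forall>w\<in>L. w \<noteq> (\<lambda>i. 0) \<and> Poly_Mapping.lookup (pos_part m w) \<le> Poly_Mapping.lookup (pos_part m u)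
       \<longrightarrow> pos_part m w = pos_part m u"
  shows "indispensable m (lattice_ideal m L :: 'k::field mpoly set) (pos_part m u)"
  unfolding indispensable_def
proof (intro conjI allI impI keys_pos_part)
  fix G :: "'k mpoly set"
  assume "(\<forall>g\<in>G. is_binomial m g) \<and> gen_ideal m G = lattice_ideal m L"
  hence G: "gen_ideal m G = lattice_ideal m L" by simp
  have "pos_part m u \<noteq> neg_part m u"
    using pos_part_neq_neg_part u(2) lattice_vanishes[OF lat u(1)] by blast
  hence "pos_part m u \<in> Poly_Mapping.keys (lattice_binomial m u :: 'k mpoly)"
    by (simp add: lattice_binomial_def xmon_def in_keys_iff lookup_minus lookup_single_not_eq)
  moreover have "(lattice_binomial m u :: 'k mpoly) \<in> gen_ideal m G"
    unfolding G lattice_ideal_eq_gen_ideal_binomials using u(1) by (intro gen_ideal_base imageI)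
  ultimately obtain g b a where g: "g \<in> G" "b \<in> Poly_Mapping.keys g" and ab: "pos_part m u = a + b"
    using keys_gen_ideal by blast
  have "g \<in> lattice_ideal m L" using gen_ideal_base[OF g(1), of m] unfolding G .
  then obtain v where v: "v \<in> L" "v \<noteq> (\<lambda>i. 0)" "Poly_Mapping.lookup (pos_part m v) \<le> Poly_Mapping.lookup b"
    using keys_lattice_ideal[OF lat _ g(2)] unfolding lattice_multiple_def by blast
  have b_le: "Poly_Mapping.lookup b \<le> Poly_Mapping.lookup (pos_part m u)"
    unfolding ab by (simp add: le_fun_def lookup_add)
  have "pos_part m v = pos_part m u" using minimal v(1,2) order_trans[OF v(3) b_le] by blast
  hence "Poly_Mapping.lookup b = Poly_Mapping.lookup (pos_part m u)" using b_le v(3) by (intro antisym) auto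
  hence "b = pos_part m u" by (intro poly_mapping_eqI) simp
  thus "\<exists>B\<in>G. pos_part m u \<in> Poly_Mapping.keys B" using g by blast
qed

lemma T_min_keys_eq:
  assumes lat: "is_lattice m L" and S: "S \<in> T_min m (lattice_ideal m L :: 'k::field mpoly set)"
    and e: "lattice_multiple m L e" "Poly_Mapping.keys e \<subseteq> S"
  shows "Poly_Mapping.keys e = S"
proof -
  let ?T = "{Poly_Mapping.keys c | c. indispensable m (lattice_ideal m L :: 'k mpoly set) c}"
  have S_minimal: "\<not> (\<exists>S'\<in>?T. S' \<subset> S)" using S unfolding T_min_def Let_def by blast
  obtain v where v: "v \<in> L" "v \<noteq> (\<lambda>i. 0)" "Poly_Mapping.lookup (pos_part m v) \<le> Poly_Mapping.lookup e"
    using e(1) unfolding lattice_multiple_def by blast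
  obtain u where u: "u \<in> L" "u \<noteq> (\<lambda>i. 0)"
    "Poly_Mapping.lookup (pos_part m u) \<le> Poly_Mapping.lookup (pos_part m v)"
    and minimal: "\<forall>w\<in>L. w \<noteq> (\<lambda>i. 0) \<and> Poly_Mapping.lookup (pos_part m w) \<le> Poly_Mapping.lookup (pos_part m u)
       \<longrightarrow> pos_part m w = pos_part m u"
    using exists_minimal_pos_part[OF v(1,2)] by blast
  have "indispensable m (lattice_ideal m L :: 'k mpoly set) (pos_part m u)"
    by (rule indispensable_minimal_pos_part[OF lat u(1,2) minimal])
  hence "Poly_Mapping.keys (pos_part m u) \<in> ?T" by blast
  moreover have keys_u: "Poly_Mapping.keys (pos_part m u) \<subseteq> Poly_Mapping.keys e"
    using u(3) v(3) by (intro keys_subset_if_lookup_le) (rule order_trans)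
  ultimately have "Poly_Mapping.keys (pos_part m u) = S" using S_minimal e(2) by blast
  thus ?thesis using keys_u e(2) by blast
qed

lemma indispensable_key_of_lattice_binomial:
  assumes "indispensable m (lattice_ideal m L :: 'k::field mpoly set) c"
  shows "\<exists>u\<in>L. c \<in> Poly_Mapping.keys (lattice_binomial m u :: 'k mpoly)"
proof -
  have c_in_every_generating_set:
    "\<forall>G. (\<forall>g\<in>G. is_binomial m g) \<and> gen_ideal m G = lattice_ideal m L \<longrightarrow>
         (\<exists>g\<in>G. c \<in> Poly_Mapping.keys (g :: 'k mpoly))"
    using assms unfolding indispensable_def by blast
  have "(\<forall>g\<in>lattice_binomial m ` L. is_binomial m g) \<and>
        gen_ideal m (lattice_binomial m ` L) = lattice_ideal m L"
    by (simp add: is_binomial_lattice_binomial lattice_ideal_eq_gen_ideal_binomials)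
  from c_in_every_generating_set[rule_format, OF this] show ?thesis by blast
qed

section \<open>Setting variables to zero\<close>

definition restrict_vars :: "nat set \<Rightarrow> 'k::field mpoly \<Rightarrow> 'k mpoly" where
  "restrict_vars S p =
     Abs_poly_mapping (\<lambda>e. if Poly_Mapping.keys e \<subseteq> S then Poly_Mapping.lookup p e else 0)"

lemma lookup_restrict_vars [simp]:
  "Poly_Mapping.lookup (restrict_vars S p) e =
     (if Poly_Mapping.keys e \<subseteq> S then Poly_Mapping.lookup p e else 0)"
proof -
  have "finite {e. (if Poly_Mapping.keys e \<subseteq> S then Poly_Mapping.lookup p e else 0) \<noteq> 0}"
    by (rule finite_subset[of _ "Poly_Mapping.keys p"]) (auto simp: in_keys_iff)
  thus ?thesis unfolding restrict_vars_def by simp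
qed

lemma restrict_vars_add: "restrict_vars S (p + q) = restrict_vars S p + restrict_vars S q"
  by (rule poly_mapping_eqI) (simp add: lookup_add)

lemma restrict_vars_diff: "restrict_vars S (p - q) = restrict_vars S p - restrict_vars S q"
  by (rule poly_mapping_eqI) (simp add: lookup_minus)

lemma restrict_vars_idem: "restrict_vars S (restrict_vars S p) = restrict_vars S p"
  by (rule poly_mapping_eqI) simp

lemma restrict_vars_eq_zero_iff:
  "restrict_vars S p = 0 \<longleftrightarrow> (\<forall>e\<in>Poly_Mapping.keys p. \<not> Poly_Mapping.keys e \<subseteq> S)"
proof
  assume "restrict_vars S p = 0"
  hence "Poly_Mapping.lookup p e = 0" if "Poly_Mapping.keys e \<subseteq> S" for e
    using that lookup_restrict_vars[of S p e] by simp
  thus "\<forall>e\<in>Poly_Mapping.keys p. \<not> Poly_Mapping.keys e \<subseteq> S" by (auto simp: in_keys_iff)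
qed (rule poly_mapping_eqI, auto simp: in_keys_iff)

lemma restrict_vars_eq_self_iff:
  "restrict_vars S p = p \<longleftrightarrow> (\<forall>e\<in>Poly_Mapping.keys p. Poly_Mapping.keys e \<subseteq> S)"
proof
  assume "restrict_vars S p = p"
  hence "Poly_Mapping.lookup p e = 0" if "\<not> Poly_Mapping.keys e \<subseteq> S" for e
    using that lookup_restrict_vars[of S p e] by simp
  thus "\<forall>e\<in>Poly_Mapping.keys p. Poly_Mapping.keys e \<subseteq> S" by (auto simp: in_keys_iff)
qed (rule poly_mapping_eqI, auto simp: in_keys_iff)

lemma restrict_vars_mult_eq_zero:
  assumes "restrict_vars S p = 0"
  shows "restrict_vars S (q * p) = 0"
  unfolding restrict_vars_eq_zero_iff
proof
  fix e assume "e \<in> Poly_Mapping.keys (q * p)"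
  then obtain a b where "b \<in> Poly_Mapping.keys p" "e = a + b" using keys_mult[of q p] by blast
  thus "\<not> Poly_Mapping.keys e \<subseteq> S" using assms unfolding restrict_vars_eq_zero_iff by (auto simp: keys_add_nat)
qed

lemma restrict_vars_mult_eq_self:
  assumes "restrict_vars S p = p" "restrict_vars S q = q"
  shows "restrict_vars S (p * q) = p * q"
  unfolding restrict_vars_eq_self_iff
proof
  fix e assume "e \<in> Poly_Mapping.keys (p * q)"
  then obtain a b where "a \<in> Poly_Mapping.keys p" "b \<in> Poly_Mapping.keys q" "e = a + b"
    using keys_mult[of p q] by blast
  thus "Poly_Mapping.keys e \<subseteq> S" using assms unfolding restrict_vars_eq_self_iff by (auto simp: keys_add_nat)
qed

lemma restrict_vars_mult: "restrict_vars S (p * q) = restrict_vars S p * restrict_vars S q"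
proof -
  let ?P = "restrict_vars S p" and ?Q = "restrict_vars S q"
  have rest_zero: "restrict_vars S (p - ?P) = 0" "restrict_vars S (q - ?Q) = 0"
    by (simp_all add: restrict_vars_diff restrict_vars_idem)
  have "p * q = ?P * ?Q + (q * (p - ?P) + ?P * (q - ?Q))" by (simp add: algebra_simps)
  hence "restrict_vars S (p * q) =
           restrict_vars S (?P * ?Q) + (restrict_vars S (q * (p - ?P)) + restrict_vars S (?P * (q - ?Q)))"
    by (simp only: restrict_vars_add)
  also have "\<dots> = ?P * ?Q"
    by (simp add: restrict_vars_mult_eq_self restrict_vars_idem restrict_vars_mult_eq_zero rest_zero)
  finally show ?thesis .
qed

lemma restrict_vars_power: "restrict_vars S (p ^ n) = restrict_vars S p ^ n"
proof (induction n)
  case 0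
  have "restrict_vars S (1 :: 'a::field mpoly) = 1" by (rule poly_mapping_eqI) (auto simp: lookup_one when_def)
  thus ?case by simp
qed (simp add: restrict_vars_mult)

lemma restrict_vars_gen_ideal:
  assumes "\<forall>g\<in>G. restrict_vars S g = 0" "p \<in> gen_ideal m G"
  shows "restrict_vars S p = 0"
proof -
  obtain F c where F: "finite F" "F \<subseteq> G" "p = (\<Sum>s\<in>F. c s * s)"
    using assms(2) unfolding gen_ideal_def by blast
  show ?thesis unfolding F(3) using F(1,2)
  proof (induction F rule: finite_induct)
    case (insert g F)
    thus ?case using assms(1) by (simp add: restrict_vars_add restrict_vars_mult_eq_zero)
  qed (simp add: restrict_vars_eq_zero_iff)
qed

text \<open>If no monomial of any \<open>B i\<close> is supported inside \<open>S = supp c\<close>, then setting the variables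
  outside \<open>S\<close> to zero kills the ideal generated by the \<open>B i\<close>, hence its radical, but not the
  binomial of \<open>I\<^sub>L\<close> that contains the indispensable monomial \<open>x\<^sup>c\<close>.\<close>
lemma T_min_meets_radical_generators:
  fixes B :: "nat \<Rightarrow> 'k::field mpoly"
  assumes lat: "is_lattice m L" and S: "S \<in> T_min m (lattice_ideal m L :: 'k mpoly set)"
    and rad: "radical m (lattice_ideal m L) = radical m (gen_ideal m (B ` {..<s}))"
  shows "\<exists>i<s. \<exists>e\<in>Poly_Mapping.keys (B i). Poly_Mapping.keys e \<subseteq> S"
proof (rule ccontr)
  assume "\<not> ?thesis"
  hence B_killed: "\<forall>b\<in>B ` {..<s}. restrict_vars S b = 0"
    unfolding restrict_vars_eq_zero_iff by blast
  obtain c where c: "indispensable m (lattice_ideal m L :: 'k mpoly set) c" "S = Poly_Mapping.keys c"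
    using S unfolding T_min_def Let_def by blast
  obtain u where u: "u \<in> L" and c_key: "c \<in> Poly_Mapping.keys (lattice_binomial m u :: 'k mpoly)"
    using indispensable_key_of_lattice_binomial[OF c(1)] by blast
  let ?g = "lattice_binomial m u :: 'k mpoly"
  have "?g \<in> lattice_ideal m L"
    unfolding lattice_ideal_eq_gen_ideal_binomials using u by (intro gen_ideal_base imageI)
  hence "?g ^ 1 \<in> lattice_ideal m L" by simp
  hence "?g \<in> radical m (lattice_ideal m L)" unfolding radical_def using in_ring_lattice_binomial by blast
  hence "?g \<in> radical m (gen_ideal m (B ` {..<s}))" unfolding rad .
  then obtain n where "?g ^ n \<in> gen_ideal m (B ` {..<s})" unfolding radical_def by blast
  hence "restrict_vars S (?g ^ n) = 0" by (rule restrict_vars_gen_ideal[OF B_killed])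
  hence "restrict_vars S ?g ^ n = 0" by (simp add: restrict_vars_power)
  hence "restrict_vars S ?g = 0" by simp
  moreover have "Poly_Mapping.lookup (restrict_vars S ?g) c \<noteq> 0"
    using c_key c(2) by (simp add: in_keys_iff)
  ultimately show False by simp
qed

lemma card_keys_binomial:
  assumes "is_binomial m p"
  shows "card (Poly_Mapping.keys p) \<le> 2"
proof -
  obtain a b where "p = xmon a - xmon b" using assms unfolding is_binomial_def by blast
  hence "Poly_Mapping.keys p \<subseteq> {a, b}" unfolding xmon_def using keys_diff by fastforce
  hence "card (Poly_Mapping.keys p) \<le> card {a, b}" by (rule card_mono[rotated]) simp
  also have "\<dots> \<le> 2" by (simp add: card_insert_le_m1)
  finally show ?thesis .
qed

lemma card_T_min_le_twice_bar:
  fixes I :: "'k::field mpoly set"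
  assumes lat: "is_lattice m L" and I_def: "I = lattice_ideal m L"
  shows "card (T_min m I) \<le> 2 * bar m I"
proof -
  obtain B where B: "\<forall>i<bar m I. is_binomial m (B i) \<and> B i \<in> I"
    and rad: "radical m I = radical m (gen_ideal m (B ` {..<bar m I}))"
    using bar_attained[OF lat I_def] by blast
  have "T_min m I \<subseteq> (\<Union>i<bar m I. Poly_Mapping.keys ` Poly_Mapping.keys (B i))"
  proof
    fix S assume S: "S \<in> T_min m I"
    then obtain i e where i: "i < bar m I" "e \<in> Poly_Mapping.keys (B i)" "Poly_Mapping.keys e \<subseteq> S"
      using T_min_meets_radical_generators[OF lat] rad unfolding I_def by blast
    have "lattice_multiple m L e" using keys_lattice_ideal[OF lat _ i(2)] B i(1) unfolding I_def by blast
    hence "Poly_Mapping.keys e = S" using T_min_keys_eq[OF lat] S i(3) unfolding I_def by blast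
    thus "S \<in> (\<Union>i<bar m I. Poly_Mapping.keys ` Poly_Mapping.keys (B i))" using i(1,2) by blast
  qed
  hence "card (T_min m I) \<le> card (\<Union>i<bar m I. Poly_Mapping.keys ` Poly_Mapping.keys (B i))"
    by (rule card_mono[rotated]) simp
  also have "\<dots> \<le> (\<Sum>i<bar m I. card (Poly_Mapping.keys ` Poly_Mapping.keys (B i)))"
    by (rule card_UN_le) simp
  also have "\<dots> \<le> (\<Sum>i<bar m I. 2)"
    using B card_keys_binomial by (intro sum_mono order_trans[OF card_image_le]) auto
  finally show ?thesis by simp
qed

theorem proposition2p15:
  fixes m :: nat and L :: "(nat \<Rightarrow> int) set"
  assumes "is_lattice m L"
    and "L \<noteq> {(\<lambda>i. 0)}"
    and "\<forall>u\<in>L. (\<forall>i. u i \<ge> 0) \<longrightarrow> u = (\<lambda>i. 0)"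
  shows "int (bar m (lattice_ideal m L :: 'k::field mpoly set))
           \<ge> \<lceil>real (card (T_min m (lattice_ideal m L :: 'k mpoly set))) / 2\<rceil>"
proof -
  let ?I = "lattice_ideal m L :: 'k mpoly set"
  have "real (card (T_min m ?I)) \<le> real (2 * bar m ?I)"
    using card_T_min_le_twice_bar[OF assms(1) refl] by (rule of_nat_mono)
  thus ?thesis by (simp add: ceiling_le_iff)
qed

end
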